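(* Consider a single element with nodes $1,\dots,N$ and SBP operators in $d$ directions: matrices $D^j\in\mathbb{R}^{N\times N}$ with $D^j\mathbf{1}=0$, a diagonal positive mass matrix $M$, and diagonal matrices $E^j=\operatorname{diag}(e^j_1,\dots,e^j_N)$ (the boundary operators $R^TBN^jR$) such that $MD^j+(D^j)^TM=E^j$ for $j=1,\dots,d$. Let $Y\subset\mathbb{R}^n$, $\omega\colon Y\to\mathbb{R}^n$, and for each $j$ let $f^j\colon Y\to\mathbb{R}^n$, $F^j\colon Y\to\mathbb{R}$, $H^j\colon Y\to\mathbb{R}^{n\times m}$, $g^j\colon Y\to\mathbb{R}^m$, $\psi^j=\omega\cdot f^j-F^j$; let $\alpha\in\mathbb{R}$. Let volume fluxes $f^{\mathrm{vol},j}$, $H^{\mathrm{vol},j}$ be symmetric and consistent with $f^j,H^j$, and surface fluxes $f^{\mathrm{num},j}$, $H^{\mathrm{num},j}$ be consistent with $f^j,H^j$, and assume both pairs satisfy, for all $u_-,u_+\in Y$ and all $j$, $$[\![\omega]\!]\cdot f^{\cdot,j}-\alpha\{\{\omega\}\}\cdot H^{\cdot,j}[\![g^j]\!]-(1-\alpha)\{\{\omega\cdot H^j\}\}[\![g^j]\!]=[\![\psi^j]\!].$$ Given nodal states $u_1,\dots,u_N\in Y$ and, for each node $k$ and direction $j$, an exterior state $u^+_{k,j}\in Y$, define $$\mathrm{VOL}_i=\sum_{j=1}^d\sum_{k=1}^N\Big(2D^j_{i,k}f^{\mathrm{vol},j}(u_i,u_k)+\alpha D^j_{i,k}H^{\mathrm{vol},j}(u_i,u_k)\big(g^j(u_k)-g^j(u_i)\big)+(1-\alpha)D^j_{i,k}H^j(u_i)\big(g^j(u_k)-g^j(u_i)\big)\Big),$$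 $$\mathrm{SURF}_i=M_{ii}^{-1}\sum_{j=1}^de^j_i\Big(f^{\mathrm{num},j}(u_i,u^+_{i,j})-f^j(u_i)+\tfrac\alpha2H^{\mathrm{num},j}(u_i,u^+_{i,j})\big(g^j(u^+_{i,j})-g^j(u_i)\big)+\tfrac{1-\alpha}2H^j(u_i)\big(g^j(u^+_{i,j})-g^j(u_i)\big)\Big),$$ and $\partial_tu_i=-\mathrm{VOL}_i-\mathrm{SURF}_i$. Then $$\sum_{i=1}^NM_{ii}\,\omega(u_i)\cdot\partial_tu_i=-\sum_{k=1}^N\sum_{j=1}^de^j_k\,F^{\mathrm{num},j}(u_k,u^+_{k,j}),$$ where $F^{\mathrm{num},j}=\{\{F^j\}\}+\{\{\omega\}\}\cdot f^{\mathrm{num},j}-\{\{\omega\cdot f^j\}\}-\tfrac\alpha4[\![\omega]\!]\cdot H^{\mathrm{num},j}[\![g^j]\!]-\tfrac{1-\alpha}4[\![\omega\cdot H^j]\!][\![g^j]\!]$, which is consistent: $F^{\mathrm{num},j}(u,u)=F^j(u)$.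
   Context: For a function $a$ on $Y$ and a pair of states $(u_-,u_+)$: $\{\{a\}\}=\tfrac12(a(u_-)+a(u_+))$, $[\![a]\!]=a(u_+)-a(u_-)$; two-point fluxes are evaluated at $(u_-,u_+)$; $\omega\cdot H^j=\omega^TH^j$. In applications $\omega=U'$ for an entropy $U$ with entropy fluxes $F^j$, $e^j_k$ is the boundary quadrature weight at node $k$ times the $j$-th component of the outward normal (zero at interior nodes), and $u^+_{k,j}$ is the neighboring element's trace; the identity expresses that the element entropy changes only by interface numerical entropy fluxes (entropy conservation). *)

theory Defs
  imports "HOL-Analysis.Analysis"
begin

text \<open>Conventions: nodes are indexed by {..<N}, directions by {..<d}.
  States live in real^'n, the auxiliary variable g^j in real^'m,
  H^j(u) is an n-by-m matrix (real^'m^'n).  omega . H = omega^T H is v*.\<close>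

definition Fnum ::
  "(real^'n \<Rightarrow> real^'n) \<Rightarrow> (real^'n \<Rightarrow> real^'n) \<Rightarrow> (real^'n \<Rightarrow> real)
   \<Rightarrow> (real^'n \<Rightarrow> real^'n \<Rightarrow> real^'n) \<Rightarrow> (real^'n \<Rightarrow> real^'m^'n)
   \<Rightarrow> (real^'n \<Rightarrow> real^'n \<Rightarrow> real^'m^'n) \<Rightarrow> (real^'n \<Rightarrow> real^'m) \<Rightarrow> real
   \<Rightarrow> real^'n \<Rightarrow> real^'n \<Rightarrow> real" where
  "Fnum \<omega> f F fn H Hn g \<alpha> a b =
     (F a + F b) / 2
     + ((1/2) *\<^sub>R (\<omega> a + \<omega> b)) \<bullet> fn a b
     - (\<omega> a \<bullet> f a + \<omega> b \<bullet> f b) / 2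
     - \<alpha> / 4 * ((\<omega> b - \<omega> a) \<bullet> (Hn a b *v (g b - g a)))
     - (1 - \<alpha>) / 4 * ((\<omega> b v* H b - \<omega> a v* H a) \<bullet> (g b - g a))"

definition entropy_conservative_pair ::
  "(real^'n) set \<Rightarrow> (real^'n \<Rightarrow> real^'n) \<Rightarrow> (real^'n \<Rightarrow> real^'n) \<Rightarrow> (real^'n \<Rightarrow> real)
   \<Rightarrow> (real^'n \<Rightarrow> real^'m^'n) \<Rightarrow> (real^'n \<Rightarrow> real^'m) \<Rightarrow> real
   \<Rightarrow> (real^'n \<Rightarrow> real^'n \<Rightarrow> real^'n) \<Rightarrow> (real^'n \<Rightarrow> real^'n \<Rightarrow> real^'m^'n) \<Rightarrow> bool" where
  "entropy_conservative_pair Y \<omega> f F H g \<alpha> fx Hx \<longleftrightarrow>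
    (\<forall>a\<in>Y. \<forall>b\<in>Y.
       (\<omega> b - \<omega> a) \<bullet> fx a b
       - \<alpha> * (((1/2) *\<^sub>R (\<omega> a + \<omega> b)) \<bullet> (Hx a b *v (g b - g a)))
       - (1 - \<alpha>) * (((1/2) *\<^sub>R (\<omega> a v* H a + \<omega> b v* H b)) \<bullet> (g b - g a))
     = (\<omega> b \<bullet> f b - F b) - (\<omega> a \<bullet> f a - F a))"

definition VOL ::
  "nat \<Rightarrow> nat \<Rightarrow> (nat \<Rightarrow> nat \<Rightarrow> nat \<Rightarrow> real) \<Rightarrow> real
   \<Rightarrow> (nat \<Rightarrow> real^'n \<Rightarrow> real^'n \<Rightarrow> real^'n) \<Rightarrow> (nat \<Rightarrow> real^'n \<Rightarrow> real^'n \<Rightarrow> real^'m^'n)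
   \<Rightarrow> (nat \<Rightarrow> real^'n \<Rightarrow> real^'m^'n) \<Rightarrow> (nat \<Rightarrow> real^'n \<Rightarrow> real^'m)
   \<Rightarrow> (nat \<Rightarrow> real^'n) \<Rightarrow> nat \<Rightarrow> real^'n" where
  "VOL N d D \<alpha> fvol Hvol H g u i =
    (\<Sum>j<d. \<Sum>k<N.
        (2 * D j i k) *\<^sub>R fvol j (u i) (u k)
      + (\<alpha> * D j i k) *\<^sub>R (Hvol j (u i) (u k) *v (g j (u k) - g j (u i)))
      + ((1 - \<alpha>) * D j i k) *\<^sub>R (H j (u i) *v (g j (u k) - g j (u i))))"

text \<open>Surface term SURF_i; up i j is the exterior state u^+_{i,j}.\<close>
definition SURF ::
  "nat \<Rightarrow> (nat \<Rightarrow> real) \<Rightarrow> (nat \<Rightarrow> nat \<Rightarrow> real) \<Rightarrow> real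
   \<Rightarrow> (nat \<Rightarrow> real^'n \<Rightarrow> real^'n) \<Rightarrow> (nat \<Rightarrow> real^'n \<Rightarrow> real^'n \<Rightarrow> real^'n)
   \<Rightarrow> (nat \<Rightarrow> real^'n \<Rightarrow> real^'n \<Rightarrow> real^'m^'n)
   \<Rightarrow> (nat \<Rightarrow> real^'n \<Rightarrow> real^'m^'n) \<Rightarrow> (nat \<Rightarrow> real^'n \<Rightarrow> real^'m)
   \<Rightarrow> (nat \<Rightarrow> real^'n) \<Rightarrow> (nat \<Rightarrow> nat \<Rightarrow> real^'n) \<Rightarrow> nat \<Rightarrow> real^'n" where
  "SURF d M e \<alpha> f fnum Hnum H g u up i =
    (1 / M i) *\<^sub>R (\<Sum>j<d. e j i *\<^sub>R
        (fnum j (u i) (up i j) - f j (u i)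
         + (\<alpha> / 2) *\<^sub>R (Hnum j (u i) (up i j) *v (g j (up i j) - g j (u i)))
         + ((1 - \<alpha>) / 2) *\<^sub>R (H j (u i) *v (g j (up i j) - g j (u i)))))"

end

theory Submission
  imports Defs
begin

text \<open>Contract the scheme with \<open>M\<^sub>i\<^sub>i \<omega>(u\<^sub>i)\<close>. In each direction the volume part is
  \<open>\<Sum>\<^sub>i\<^sub>k Q\<^sub>i\<^sub>k T\<^sub>i\<^sub>k\<close> with \<open>Q = M D\<close> and \<open>T\<^sub>i\<^sub>k\<close> the entropy contraction of the two-point volume
  term. Entropy conservation and symmetry of the volume fluxes make \<open>T\<^sub>i\<^sub>k - T\<^sub>k\<^sub>i\<close> a difference
  of the potential \<open>\<psi> = \<omega> \<bullet> f - F\<close>; then \<open>Q + Q\<^sup>T = E\<close> and \<open>D 1 = 0\<close> collapse the double sum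
  to the boundary term \<open>\<Sum>\<^sub>i E\<^sub>i F(u\<^sub>i)\<close>. Entropy conservation of the surface fluxes turns
  \<open>F(u\<^sub>i)\<close> plus the contracted surface term into \<open>F\<^sup>n\<^sup>u\<^sup>m(u\<^sub>i, u\<^sup>+)\<close>.\<close>

lemma sbp_column_sum:
  fixes Q :: "nat \<Rightarrow> nat \<Rightarrow> 'a::ab_group_add"
  assumes sbp: "\<And>i k. i < N \<Longrightarrow> k < N \<Longrightarrow> Q i k + Q k i = (if i = k then E i else 0)"
    and rows: "\<And>i. i < N \<Longrightarrow> (\<Sum>k<N. Q i k) = 0"
    and "k < N"
  shows "(\<Sum>i<N. Q i k) = E k"
proof -
  have "(\<Sum>i<N. Q i k) = (\<Sum>i<N. (if k = i then E k else 0) - Q k i)"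
    using sbp \<open>k < N\<close> by (intro sum.cong refl) (simp add: eq_diff_eq add.commute)
  also have "\<dots> = E k"
    using rows \<open>k < N\<close> by (simp add: sum_subtractf)
  finally show ?thesis .
qed

lemma sbp_flux_differencing_sum:
  fixes Q T :: "nat \<Rightarrow> nat \<Rightarrow> 'a::field_char_0"
  assumes sbp: "\<And>i k. i < N \<Longrightarrow> k < N \<Longrightarrow> Q i k + Q k i = (if i = k then E i else 0)"
    and rows: "\<And>i. i < N \<Longrightarrow> (\<Sum>k<N. Q i k) = 0"
    and T_diag: "\<And>i. i < N \<Longrightarrow> T i i = 2 * c i"
    and T_antisym: "\<And>i k. i < N \<Longrightarrow> k < N \<Longrightarrow> T i k - T k i = 2 * (\<psi> i - \<psi> k)"
  shows "(\<Sum>i<N. \<Sum>k<N. Q i k * T i k) = (\<Sum>i<N. E i * (c i - \<psi> i))"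
proof -
  have "2 * (\<Sum>i<N. \<Sum>k<N. Q i k * T i k) = (\<Sum>i<N. \<Sum>k<N. Q i k * T i k + Q k i * T k i)"
    unfolding mult_2 by (subst (2) sum.swap) (simp only: sum.distrib)
  also have "\<dots> = (\<Sum>i<N. \<Sum>k<N. (if i = k then E i * T i i else 0) + Q i k * (T i k - T k i))"
  proof (intro sum.cong refl)
    fix i k assume "i \<in> {..<N}" "k \<in> {..<N}"
    then have "Q k i = (if i = k then E i else 0) - Q i k"
      using sbp by (simp add: eq_diff_eq add.commute)
    then show "Q i k * T i k + Q k i * T k i
        = (if i = k then E i * T i i else 0) + Q i k * (T i k - T k i)"
      by (cases "i = k") (simp_all add: algebra_simps)
  qed
  also have "\<dots> = (\<Sum>i<N. \<Sum>k<N. (if i = k then 2 * (E i * c i) else 0) + 2 * (Q i k * (\<psi> i - \<psi> k)))"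
    by (intro sum.cong refl) (simp add: T_diag T_antisym mult.left_commute)
  also have "\<dots> = 2 * (\<Sum>i<N. E i * c i) + 2 * (\<Sum>i<N. \<Sum>k<N. Q i k * (\<psi> i - \<psi> k))"
    by (simp add: sum.distrib sum_distrib_left)
  also have "(\<Sum>i<N. \<Sum>k<N. Q i k * (\<psi> i - \<psi> k))
      = (\<Sum>i<N. \<psi> i * (\<Sum>k<N. Q i k)) - (\<Sum>k<N. \<psi> k * (\<Sum>i<N. Q i k))"
  proof -
    have "(\<Sum>i<N. \<Sum>k<N. Q i k * \<psi> k) = (\<Sum>k<N. \<psi> k * (\<Sum>i<N. Q i k))"
      unfolding sum_distrib_left by (subst sum.swap) (simp add: mult.commute)
    then show ?thesis
      by (simp add: right_diff_distrib sum_subtractf sum_distrib_left mult.commute)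
  qed
  also have "\<dots> = - (\<Sum>k<N. E k * \<psi> k)"
    using rows sbp_column_sum[OF sbp rows] by (simp add: mult.commute)
  finally have "2 * (\<Sum>i<N. \<Sum>k<N. Q i k * T i k) = 2 * (\<Sum>i<N. E i * (c i - \<psi> i))"
    by (simp add: right_diff_distrib sum_subtractf)
  then show ?thesis by simp
qed

definition entropy_potential ::
  "(real^'n \<Rightarrow> real^'n) \<Rightarrow> (real^'n \<Rightarrow> real^'n) \<Rightarrow> (real^'n \<Rightarrow> real) \<Rightarrow> real^'n \<Rightarrow> real" where
  "entropy_potential \<omega> f F a = \<omega> a \<bullet> f a - F a"

definition flux_entropy_contraction ::
  "(real^'n \<Rightarrow> real^'n) \<Rightarrow> (real^'n \<Rightarrow> real^'m^'n) \<Rightarrow> (real^'n \<Rightarrow> real^'m) \<Rightarrow> real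
   \<Rightarrow> (real^'n \<Rightarrow> real^'n \<Rightarrow> real^'n) \<Rightarrow> (real^'n \<Rightarrow> real^'n \<Rightarrow> real^'m^'n)
   \<Rightarrow> real^'n \<Rightarrow> real^'n \<Rightarrow> real" where
  "flux_entropy_contraction \<omega> H g \<alpha> fx Hx a b =
     (\<omega> b - \<omega> a) \<bullet> fx a b
     - \<alpha> * (((1/2) *\<^sub>R (\<omega> a + \<omega> b)) \<bullet> (Hx a b *v (g b - g a)))
     - (1 - \<alpha>) * (((1/2) *\<^sub>R (\<omega> a v* H a + \<omega> b v* H b)) \<bullet> (g b - g a))"

definition volume_flux_term ::
  "(real^'n \<Rightarrow> real^'n \<Rightarrow> real^'n) \<Rightarrow> (real^'n \<Rightarrow> real^'n \<Rightarrow> real^'m^'n)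
   \<Rightarrow> (real^'n \<Rightarrow> real^'m^'n) \<Rightarrow> (real^'n \<Rightarrow> real^'m) \<Rightarrow> real
   \<Rightarrow> real^'n \<Rightarrow> real^'n \<Rightarrow> real^'n" where
  "volume_flux_term fx Hx H g \<alpha> a b =
     2 *\<^sub>R fx a b + \<alpha> *\<^sub>R (Hx a b *v (g b - g a)) + (1 - \<alpha>) *\<^sub>R (H a *v (g b - g a))"

definition surface_flux_term ::
  "(real^'n \<Rightarrow> real^'n) \<Rightarrow> (real^'n \<Rightarrow> real^'n \<Rightarrow> real^'n) \<Rightarrow> (real^'n \<Rightarrow> real^'n \<Rightarrow> real^'m^'n)
   \<Rightarrow> (real^'n \<Rightarrow> real^'m^'n) \<Rightarrow> (real^'n \<Rightarrow> real^'m) \<Rightarrow> real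
   \<Rightarrow> real^'n \<Rightarrow> real^'n \<Rightarrow> real^'n" where
  "surface_flux_term f fx Hx H g \<alpha> a b =
     fx a b - f a + (\<alpha> / 2) *\<^sub>R (Hx a b *v (g b - g a))
     + ((1 - \<alpha>) / 2) *\<^sub>R (H a *v (g b - g a))"

lemma entropy_conservative_pair_iff_contraction:
  "entropy_conservative_pair Y \<omega> f F H g \<alpha> fx Hx \<longleftrightarrow>
     (\<forall>a\<in>Y. \<forall>b\<in>Y. flux_entropy_contraction \<omega> H g \<alpha> fx Hx a b
                     = entropy_potential \<omega> f F b - entropy_potential \<omega> f F a)"
  by (simp add: entropy_conservative_pair_def flux_entropy_contraction_def entropy_potential_def)

lemma VOL_eq_sum_volume_flux_term:
  "VOL N d D \<alpha> fvol Hvol H g u i =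
     (\<Sum>j<d. \<Sum>k<N. D j i k *\<^sub>R volume_flux_term (fvol j) (Hvol j) (H j) (g j) \<alpha> (u i) (u k))"
  by (simp add: VOL_def volume_flux_term_def scaleR_add_right mult.commute)

lemma SURF_eq_sum_surface_flux_term:
  "SURF d M e \<alpha> f fnum Hnum H g u up i =
     (1 / M i) *\<^sub>R (\<Sum>j<d. e j i *\<^sub>R surface_flux_term (f j) (fnum j) (Hnum j) (H j) (g j) \<alpha> (u i) (up i j))"
  by (simp add: SURF_def surface_flux_term_def)

lemma volume_flux_term_same:
  assumes "fx a a = f a"
  shows "volume_flux_term fx Hx H g \<alpha> a a = 2 *\<^sub>R f a"
  using assms by (simp add: volume_flux_term_def)

lemma inner_volume_flux_term_antisym:
  assumes "fx b a = fx a b" and "Hx b a = Hx a b"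
  shows "\<omega> a \<bullet> volume_flux_term fx Hx H g \<alpha> a b - \<omega> b \<bullet> volume_flux_term fx Hx H g \<alpha> b a
           = - 2 * flux_entropy_contraction \<omega> H g \<alpha> fx Hx a b"
  using assms
  by (simp add: volume_flux_term_def flux_entropy_contraction_def inner_add_left inner_diff_left
      inner_add_right inner_diff_right dot_lmul_matrix algebra_simps)
    (simp add: field_simps)

lemma Fnum_eq_surface_flux_term_contraction:
  "Fnum \<omega> f F fx H Hx g \<alpha> a b
     = F a + \<omega> a \<bullet> surface_flux_term f fx Hx H g \<alpha> a b
       + (flux_entropy_contraction \<omega> H g \<alpha> fx Hx a b
          - (entropy_potential \<omega> f F b - entropy_potential \<omega> f F a)) / 2"
  by (simp add: Fnum_def surface_flux_term_def flux_entropy_contraction_def entropy_potential_def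
      inner_add_left inner_diff_left inner_add_right inner_diff_right dot_lmul_matrix algebra_simps)
    (simp add: field_simps)

lemma Fnum_eq_surface_flux_term:
  assumes "entropy_conservative_pair Y \<omega> f F H g \<alpha> fx Hx" and "a \<in> Y" and "b \<in> Y"
  shows "Fnum \<omega> f F fx H Hx g \<alpha> a b = F a + \<omega> a \<bullet> surface_flux_term f fx Hx H g \<alpha> a b"
  using assms by (simp add: Fnum_eq_surface_flux_term_contraction entropy_conservative_pair_iff_contraction)

lemma Fnum_same:
  assumes "fx a a = f a"
  shows "Fnum \<omega> f F fx H Hx g \<alpha> a a = F a"
  using assms by (simp add: Fnum_def scaleR_2[symmetric])

lemma flux_differencing_entropy_sum:
  fixes D :: "nat \<Rightarrow> nat \<Rightarrow> real" and M E :: "nat \<Rightarrow> real"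
  assumes sbp: "\<And>i k. i < N \<Longrightarrow> k < N \<Longrightarrow> M i * D i k + D k i * M k = (if i = k then E i else 0)"
    and rows: "\<And>i. i < N \<Longrightarrow> (\<Sum>k<N. D i k) = 0"
    and ec: "entropy_conservative_pair Y \<omega> f F H g \<alpha> fx Hx"
    and fx_sym: "\<And>a b. a \<in> Y \<Longrightarrow> b \<in> Y \<Longrightarrow> fx a b = fx b a"
    and Hx_sym: "\<And>a b. a \<in> Y \<Longrightarrow> b \<in> Y \<Longrightarrow> Hx a b = Hx b a"
    and fx_same: "\<And>a. a \<in> Y \<Longrightarrow> fx a a = f a"
    and u: "\<And>i. i < N \<Longrightarrow> u i \<in> Y"
  shows "(\<Sum>i<N. \<Sum>k<N. M i * D i k * (\<omega> (u i) \<bullet> volume_flux_term fx Hx H g \<alpha> (u i) (u k)))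
           = (\<Sum>i<N. E i * F (u i))"
proof -
  have "(\<Sum>i<N. \<Sum>k<N. M i * D i k * (\<omega> (u i) \<bullet> volume_flux_term fx Hx H g \<alpha> (u i) (u k)))
      = (\<Sum>i<N. E i * (\<omega> (u i) \<bullet> f (u i) - entropy_potential \<omega> f F (u i)))"
  proof (rule sbp_flux_differencing_sum)
    fix i k assume i: "i < N" and k: "k < N"
    show "M i * D i k + M k * D k i = (if i = k then E i else 0)"
      using sbp[OF i k] by (simp add: mult.commute)
    show "\<omega> (u i) \<bullet> volume_flux_term fx Hx H g \<alpha> (u i) (u k)
        - \<omega> (u k) \<bullet> volume_flux_term fx Hx H g \<alpha> (u k) (u i)
        = 2 * (entropy_potential \<omega> f F (u i) - entropy_potential \<omega> f F (u k))"
      using ec u[OF i] u[OF k] fx_sym Hx_sym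
      by (simp add: inner_volume_flux_term_antisym entropy_conservative_pair_iff_contraction)
  next
    fix i assume i: "i < N"
    show "(\<Sum>k<N. M i * D i k) = 0"
      using rows[OF i] by (simp add: sum_distrib_left[symmetric])
    show "\<omega> (u i) \<bullet> volume_flux_term fx Hx H g \<alpha> (u i) (u i) = 2 * (\<omega> (u i) \<bullet> f (u i))"
      using fx_same u[OF i] by (simp add: volume_flux_term_same)
  qed
  then show ?thesis by (simp add: entropy_potential_def)
qed

lemma sum_inner_VOL_eq_boundary_entropy:
  assumes "\<And>j i. j < d \<Longrightarrow> i < N \<Longrightarrow> (\<Sum>k<N. D j i k) = 0"
    and "\<And>j i k. j < d \<Longrightarrow> i < N \<Longrightarrow> k < N \<Longrightarrow>
           M i * D j i k + D j k i * M k = (if i = k then e j i else 0)"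
    and "\<And>j. j < d \<Longrightarrow> entropy_conservative_pair Y \<omega> (f j) (F j) (H j) (g j) \<alpha> (fvol j) (Hvol j)"
    and "\<And>j a b. j < d \<Longrightarrow> a \<in> Y \<Longrightarrow> b \<in> Y \<Longrightarrow> fvol j a b = fvol j b a"
    and "\<And>j a b. j < d \<Longrightarrow> a \<in> Y \<Longrightarrow> b \<in> Y \<Longrightarrow> Hvol j a b = Hvol j b a"
    and "\<And>j a. j < d \<Longrightarrow> a \<in> Y \<Longrightarrow> fvol j a a = f j a"
    and "\<And>i. i < N \<Longrightarrow> u i \<in> Y"
  shows "(\<Sum>i<N. M i * (\<omega> (u i) \<bullet> VOL N d D \<alpha> fvol Hvol H g u i))
           = (\<Sum>i<N. \<Sum>j<d. e j i * F j (u i))"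
proof -
  let ?V = "\<lambda>j. volume_flux_term (fvol j) (Hvol j) (H j) (g j) \<alpha>"
  have "(\<Sum>i<N. M i * (\<omega> (u i) \<bullet> VOL N d D \<alpha> fvol Hvol H g u i))
      = (\<Sum>i<N. \<Sum>j<d. \<Sum>k<N. M i * D j i k * (\<omega> (u i) \<bullet> ?V j (u i) (u k)))"
    by (simp add: VOL_eq_sum_volume_flux_term inner_sum_right sum_distrib_left mult.assoc)
  also have "\<dots> = (\<Sum>j<d. \<Sum>i<N. \<Sum>k<N. M i * D j i k * (\<omega> (u i) \<bullet> ?V j (u i) (u k)))"
    by (rule sum.swap)
  also have "\<dots> = (\<Sum>j<d. \<Sum>i<N. e j i * F j (u i))"
    using assms by (intro sum.cong refl flux_differencing_entropy_sum[where Y = Y]) auto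
  finally show ?thesis by (simp only: sum.swap[of _ "{..<d}"])
qed

theorem mainTheorem17:
  fixes N d :: nat
    and D :: "nat \<Rightarrow> nat \<Rightarrow> nat \<Rightarrow> real"
    and M :: "nat \<Rightarrow> real"
    and e :: "nat \<Rightarrow> nat \<Rightarrow> real"
    and Y :: "(real^'n) set"
    and \<omega> :: "real^'n \<Rightarrow> real^'n"
    and f :: "nat \<Rightarrow> real^'n \<Rightarrow> real^'n"
    and F :: "nat \<Rightarrow> real^'n \<Rightarrow> real"
    and H :: "nat \<Rightarrow> real^'n \<Rightarrow> real^'m^'n"
    and g :: "nat \<Rightarrow> real^'n \<Rightarrow> real^'m"
    and \<alpha> :: real
    and fvol fnum :: "nat \<Rightarrow> real^'n \<Rightarrow> real^'n \<Rightarrow> real^'n"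
    and Hvol Hnum :: "nat \<Rightarrow> real^'n \<Rightarrow> real^'n \<Rightarrow> real^'m^'n"
    and u :: "nat \<Rightarrow> real^'n"
    and up :: "nat \<Rightarrow> nat \<Rightarrow> real^'n"
    and dudt :: "nat \<Rightarrow> real^'n"
  assumes D_one: "\<forall>j<d. \<forall>i<N. (\<Sum>k<N. D j i k) = 0"
    and M_pos: "\<forall>i<N. M i > 0"
    and SBP: "\<forall>j<d. \<forall>i<N. \<forall>k<N.
                 M i * D j i k + D j k i * M k = (if i = k then e j i else 0)"
    and fvol_sym: "\<forall>j<d. \<forall>a\<in>Y. \<forall>b\<in>Y. fvol j a b = fvol j b a"
    and Hvol_sym: "\<forall>j<d. \<forall>a\<in>Y. \<forall>b\<in>Y. Hvol j a b = Hvol j b a"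
    and fvol_cons: "\<forall>j<d. \<forall>a\<in>Y. fvol j a a = f j a"
    and Hvol_cons: "\<forall>j<d. \<forall>a\<in>Y. Hvol j a a = H j a"
    and fnum_cons: "\<forall>j<d. \<forall>a\<in>Y. fnum j a a = f j a"
    and Hnum_cons: "\<forall>j<d. \<forall>a\<in>Y. Hnum j a a = H j a"
    and EC_vol: "\<forall>j<d. entropy_conservative_pair Y \<omega> (f j) (F j) (H j) (g j) \<alpha> (fvol j) (Hvol j)"
    and EC_num: "\<forall>j<d. entropy_conservative_pair Y \<omega> (f j) (F j) (H j) (g j) \<alpha> (fnum j) (Hnum j)"
    and u_Y: "\<forall>i<N. u i \<in> Y"
    and up_Y: "\<forall>k<N. \<forall>j<d. up k j \<in> Y"
    and dudt_def: "\<forall>i<N. dudt i =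
        - VOL N d D \<alpha> fvol Hvol H g u i - SURF d M e \<alpha> f fnum Hnum H g u up i"
  shows "(\<Sum>i<N. M i * (\<omega> (u i) \<bullet> dudt i))
           = - (\<Sum>k<N. \<Sum>j<d. e j k * Fnum \<omega> (f j) (F j) (fnum j) (H j) (Hnum j) (g j) \<alpha> (u k) (up k j))
         \<and> (\<forall>j<d. \<forall>a\<in>Y. Fnum \<omega> (f j) (F j) (fnum j) (H j) (Hnum j) (g j) \<alpha> a a = F j a)"
proof
  show "\<forall>j<d. \<forall>a\<in>Y. Fnum \<omega> (f j) (F j) (fnum j) (H j) (Hnum j) (g j) \<alpha> a a = F j a"
    using fnum_cons by (simp add: Fnum_same)
next
  let ?S = "\<lambda>i j. surface_flux_term (f j) (fnum j) (Hnum j) (H j) (g j) \<alpha> (u i) (up i j)"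
  have vol: "(\<Sum>i<N. M i * (\<omega> (u i) \<bullet> VOL N d D \<alpha> fvol Hvol H g u i))
      = (\<Sum>i<N. \<Sum>j<d. e j i * F j (u i))"
    using D_one SBP EC_vol fvol_sym Hvol_sym fvol_cons u_Y
    by (intro sum_inner_VOL_eq_boundary_entropy[where Y = Y]) auto
  have surf: "(\<Sum>i<N. M i * (\<omega> (u i) \<bullet> SURF d M e \<alpha> f fnum Hnum H g u up i))
      = (\<Sum>i<N. \<Sum>j<d. e j i * (\<omega> (u i) \<bullet> ?S i j))"
    using M_pos by (intro sum.cong refl) (auto simp: SURF_eq_sum_surface_flux_term inner_sum_right)
  have "(\<Sum>i<N. M i * (\<omega> (u i) \<bullet> dudt i))
      = - (\<Sum>i<N. M i * (\<omega> (u i) \<bullet> VOL N d D \<alpha> fvol Hvol H g u i))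
        - (\<Sum>i<N. M i * (\<omega> (u i) \<bullet> SURF d M e \<alpha> f fnum Hnum H g u up i))"
    using dudt_def by (simp add: inner_diff_right right_diff_distrib sum_subtractf sum_negf)
  also have "\<dots> = - (\<Sum>i<N. \<Sum>j<d. e j i * (F j (u i) + \<omega> (u i) \<bullet> ?S i j))"
    unfolding vol surf by (simp add: distrib_left sum.distrib)
  also have "\<dots> = - (\<Sum>k<N. \<Sum>j<d. e j k * Fnum \<omega> (f j) (F j) (fnum j) (H j) (Hnum j) (g j) \<alpha> (u k) (up k j))"
    using EC_num u_Y up_Y by (simp add: Fnum_eq_surface_flux_term[where Y = Y])
  finally show "(\<Sum>i<N. M i * (\<omega> (u i) \<bullet> dudt i))
      = - (\<Sum>k<N. \<Sum>j<d. e j k * Fnum \<omega> (f j) (F j) (fnum j) (H j) (Hnum j) (g j) \<alpha> (u k) (up k j))" .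
qed

end
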